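(* Let $C>0$ and $\epsilon\in(0,1)$. The following inclusions hold as germs at $\infty$ (i.e. each holds after removing from the left-hand set all points of modulus at most some $R>0$): (1) for $D>0$, $\epsilon'\in(\epsilon,1)$ and $\delta>0$, we have $T(U_D^{\epsilon'},\delta)\subseteq U_C^\epsilon$; (2) for $D>C$ and $\delta>0$, we have $T(U_D^\epsilon,\delta)\subseteq U_C^\epsilon$; (3) for $\nu>0$, we have $\nu\cdot U_C^\epsilon\subseteq U_{\nu C}^\epsilon$ if $\nu\le1$, and $\nu\cdot U_C^\epsilon\subseteq U_C^\epsilon$ if $\nu\ge1$; (4) $U_C^\epsilon+U_C^\epsilon\subseteq U_{C/2}^\epsilon$; (5) for any standard power domain $U$, there exists $a>0$ such that $\log\left(U_C^\epsilon\right)\cap H(a)\subseteq U\cap H(a)$.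
   Context: For $a\in\mathbb{R}$, $H(a):=\{z\in\mathbb{C}:\operatorname{Re}z>a\}$. For $C>0$ and $\epsilon\in(0,1)$, let $\phi_C^\epsilon:H(0)\to\mathbb{C}$, $\phi_C^\epsilon(z)=z+C(1+z)^\epsilon$ (principal branch of the power), and let the standard power domain be $U_C^\epsilon:=\phi_C^\epsilon(H(0))$; a standard power domain is any set of this form. For $A\subseteq\mathbb{C}$ and $\delta>0$, $T(A,\delta):=\{z\in\mathbb{C}:d(z,A)<\delta\}$. In (3), $\nu\cdot U=\{\nu z:z\in U\}$; in (4), $U+U$ is the Minkowski sum; in (5), $\log$ is the principal branch of the logarithm on $\mathbb{C}\setminus(-\infty,0]$. *)

theory Defs
  imports "HOL-Analysis.Analysis"
begin

definition Hplane :: "real \<Rightarrow> complex set" where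
  "Hplane a = {z. Re z > a}"

text \<open>phi_C^eps(z) = z + C (1+z)^eps, principal branch (complex powr uses Ln).\<close>
definition phiCe :: "real \<Rightarrow> real \<Rightarrow> complex \<Rightarrow> complex" where
  "phiCe C eps z = z + complex_of_real C * (1 + z) powr complex_of_real eps"

definition std_power_domain :: "real \<Rightarrow> real \<Rightarrow> complex set" where
  "std_power_domain C eps = phiCe C eps ` Hplane 0"

definition is_std_power_domain :: "complex set \<Rightarrow> bool" where
  "is_std_power_domain U \<longleftrightarrow> (\<exists>C eps. C > 0 \<and> 0 < eps \<and> eps < 1 \<and> U = std_power_domain C eps)"

definition tube :: "complex set \<Rightarrow> real \<Rightarrow> complex set" where
  "tube A \<delta> = {z. infdist z A < \<delta>}"

definition germ_subset :: "complex set \<Rightarrow> complex set \<Rightarrow> bool" where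
  "germ_subset A B \<longleftrightarrow> (\<exists>R>0. \<forall>z\<in>A. norm z > R \<longrightarrow> z \<in> B)"

end

(*
  If Re w > 0, |w| is large and the margin
  Re w - C Re (1 + w)^e exceeds eta |1 + w|^e, then z |-> w - C (1 + z)^e maps the disc of
  radius eta |1 + w|^e about w - C (1 + w)^e contractively into itself, and its fixed point
  is a preimage of w in H(0).  Each inclusion thus reduces to a lower bound for the margin
  on the left-hand set, obtained from cos(e pi/2) |u|^e <= Re u^e for Re u > 0 and from the
  Lipschitz bound for u^e away from the branch cut (moving u by o(|u|) moves u^e by
  o(|u|^e)).  In (1) the larger exponent e' wins; in (2) and (3) the constant in front of
  (1 + z)^e still exceeds the new one, D > C resp. nu C > C' nu^e.  In (4) we use
  Re (X + iY)^e <= 2 X^e + cos(e pi/2) |Y|^e for X >= 0: with 1 + x + y = X + iY the first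
  term is absorbed by Re (z1 + z2), and the second is essentially
  cos(e pi/2) (|1 + z1|^e + |1 + z2|^e), half of what Re (x + y) gains over Re (z1 + z2).
  In (5) Ln U lies in the strip |Im| <= pi, whose far right part lies in every standard
  power domain.
*)
theory Submission
  imports Defs "HOL-Real_Asymp.Real_Asymp"
begin

section \<open>Real powers of complex numbers\<close>

lemma norm_powr_of_real [simp]: "norm (u powr complex_of_real e) = norm u powr e"
  by (simp add: norm_powr_real_powr')

lemma Re_powr_of_real_le: "Re (u powr complex_of_real e) \<le> norm u powr e"
  using complex_Re_le_cmod[of "u powr complex_of_real e"] by simp

lemma Re_powr_of_real:
  assumes "u \<noteq> 0"
  shows "Re (u powr complex_of_real e) = norm u powr e * cos (e * Im (Ln u))"
  using assms by (simp add: powr_def Re_exp)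

lemma Re_powr_of_real_ge:
  assumes "0 \<le> e" "e \<le> 2" "0 < Re u"
  shows "cos (e * pi / 2) * norm u powr e \<le> Re (u powr complex_of_real e)"
proof -
  have "\<bar>Im (Ln u)\<bar> \<le> pi / 2"
    using Re_Ln_pos_lt_imp[OF assms(3)] by linarith
  then have "e * \<bar>Im (Ln u)\<bar> \<le> e * (pi / 2)"
    using assms(1) by (rule mult_left_mono)
  then have "\<bar>e * Im (Ln u)\<bar> \<le> e * (pi / 2)"
    using assms(1) by (simp add: abs_mult)
  moreover have "e * (pi / 2) \<le> pi"
    using assms(2) by (simp add: field_simps)
  ultimately have "cos (e * pi / 2) \<le> cos \<bar>e * Im (Ln u)\<bar>"
    by (intro cos_monotone_0_pi_le) auto
  then have "cos (e * pi / 2) * norm u powr e \<le> cos (e * Im (Ln u)) * norm u powr e"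
    by (simp add: mult_right_mono)
  moreover have "u \<noteq> 0"
    using assms(3) by auto
  ultimately show ?thesis
    by (simp add: Re_powr_of_real mult.commute)
qed

lemma cos_pi_half_mult_pos: "0 \<le> e \<Longrightarrow> e < 1 \<Longrightarrow> 0 < cos (e * pi / 2)"
proof (rule cos_gt_zero_pi)
  assume "0 \<le> e" "e < 1"
  then show "- (pi / 2) < e * pi / 2" "e * pi / 2 < pi / 2"
    using pi_gt_zero mult_strict_right_mono[of e 1 pi] mult_nonneg_nonneg[of e pi] by linarith+
qed

lemma norm_powr_diff_le_convex:
  fixes S :: "complex set"
  assumes "convex S" "S \<inter> \<real>\<^sub>\<le>\<^sub>0 = {}" "0 < M" "\<And>\<xi>. \<xi> \<in> S \<Longrightarrow> M \<le> norm \<xi>"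
    and "0 \<le> e" "e \<le> 1" "u \<in> S" "v \<in> S"
  shows "norm (u powr complex_of_real e - v powr complex_of_real e) \<le> e * M powr (e - 1) * norm (u - v)"
proof (rule field_differentiable_bound[OF assms(1) _ _ assms(7,8)])
  fix \<xi> assume "\<xi> \<in> S"
  then have "\<xi> \<notin> \<real>\<^sub>\<le>\<^sub>0" "M \<le> norm \<xi>"
    using assms(2,4) by auto
  then show "((\<lambda>z. z powr complex_of_real e) has_field_derivative
      complex_of_real e * \<xi> powr (complex_of_real e - 1)) (at \<xi> within S)"
    by (auto intro: has_field_derivative_at_within has_field_derivative_powr)
  have "complex_of_real e - 1 = complex_of_real (e - 1)"
    by simp
  then have "norm (complex_of_real e * \<xi> powr (complex_of_real e - 1)) = e * norm \<xi> powr (e - 1)"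
    using assms(5) by (simp only: norm_mult norm_powr_of_real norm_of_real abs_of_nonneg)
  also have "\<dots> \<le> e * M powr (e - 1)"
    using \<open>M \<le> norm \<xi>\<close> assms(3,5,6) by (intro mult_left_mono powr_mono2') auto
  finally show "norm (complex_of_real e * \<xi> powr (complex_of_real e - 1)) \<le> e * M powr (e - 1)" .
qed

lemma cball_half_norm_disjoint_nonpos_Reals:
  assumes "0 \<le> Re a" "a \<noteq> 0"
  shows "cball a (norm a / 2) \<inter> \<real>\<^sub>\<le>\<^sub>0 = {}"
proof -
  have dist_bound: "norm a \<le> dist a \<xi>" if "\<xi> \<in> \<real>\<^sub>\<le>\<^sub>0" for \<xi>
  proof -
    have "Re \<xi> \<le> 0" "Im \<xi> = 0"
      using that by (auto simp: complex_nonpos_Reals_iff)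
    then have "(Re a)\<^sup>2 \<le> (Re a - Re \<xi>)\<^sup>2"
      using assms(1) by (intro power_mono) linarith+
    then have "(norm a)\<^sup>2 \<le> (dist a \<xi>)\<^sup>2"
      using \<open>Im \<xi> = 0\<close> by (simp add: dist_norm cmod_power2)
    then show ?thesis
      by (rule power2_le_imp_le) simp
  qed
  show ?thesis
  proof (intro equals0I)
    fix \<xi> assume "\<xi> \<in> cball a (norm a / 2) \<inter> \<real>\<^sub>\<le>\<^sub>0"
    then have "dist a \<xi> \<le> norm a / 2" "norm a \<le> dist a \<xi>"
      using dist_bound by auto
    moreover have "0 < norm a"
      using assms(2) by simp
    ultimately show False
      by linarith
  qed
qed

lemma norm_powr_diff_le_cball:
  assumes "0 \<le> Re a" "0 \<le> e" "e \<le> 1" "u \<in> cball a (norm a / 2)" "v \<in> cball a (norm a / 2)"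
  shows "norm (u powr complex_of_real e - v powr complex_of_real e) \<le> e * (norm a / 2) powr (e - 1) * norm (u - v)"
proof (cases "a = 0")
  case False
  have "norm a / 2 \<le> norm \<xi>" if "\<xi> \<in> cball a (norm a / 2)" for \<xi>
    using that norm_triangle_ineq2[of a "a - \<xi>"] by (simp add: dist_norm)
  with False show ?thesis
    by (intro norm_powr_diff_le_convex[OF convex_cball cball_half_norm_disjoint_nonpos_Reals])
      (use assms in auto)
qed (use assms in simp)

lemma Re_ii_mult_powr:
  assumes "y \<noteq> 0"
  shows "Re ((\<i> * complex_of_real y) powr complex_of_real e) = cos (e * pi / 2) * \<bar>y\<bar> powr e"
proof -
  have nz: "\<i> * complex_of_real y \<noteq> 0"
    using assms by simp
  have "cos (e * Im (Ln (\<i> * complex_of_real y))) = cos (e * pi / 2)"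
  proof (cases "0 < y")
    case True
    then have "Im (Ln (\<i> * complex_of_real y)) = pi / 2"
      using Im_Ln_eq_pi_half(1)[OF nz] by simp
    then show ?thesis
      by (metis times_divide_eq_right)
  next
    case False
    then have "Im (Ln (\<i> * complex_of_real y)) = - pi / 2"
      using Im_Ln_eq_pi_half(2)[OF nz] assms by simp
    moreover have "e * (- pi / 2) = - (e * pi / 2)"
      by simp
    ultimately show ?thesis
      by (metis cos_minus)
  qed
  moreover have "norm (\<i> * complex_of_real y) = \<bar>y\<bar>"
    by (simp add: norm_mult)
  ultimately show ?thesis
    using Re_powr_of_real[OF nz, of e] by (simp add: mult.commute)
qed

lemma mult_powr_minus_one_le:
  fixes x y e :: real
  assumes "0 \<le> x" "x \<le> y" "0 \<le> e" "e \<le> 1"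
  shows "e * y powr (e - 1) * x \<le> x powr e"
proof (cases "x = 0")
  case False
  have "e * (y powr (e - 1) * x) \<le> y powr (e - 1) * x"
    using assms by (intro mult_left_le_one_le) auto
  also have "\<dots> \<le> x powr (e - 1) * x"
    using False assms by (intro mult_right_mono powr_mono2') auto
  also have "\<dots> = x powr e"
    using False assms(1) by (simp add: powr_diff)
  finally show ?thesis
    by (simp add: mult.assoc)
qed simp

lemma Re_Complex_powr_le:
  assumes "0 < e" "e < 1" "0 \<le> x"
  shows "Re (Complex x y powr complex_of_real e) \<le> 2 * x powr e + cos (e * pi / 2) * \<bar>y\<bar> powr e"
proof (cases "x \<le> \<bar>y\<bar> \<and> y \<noteq> 0")
  case True
  \<comment> \<open>compare with \<open>(\<i> y) powr e\<close> along the horizontal line through both points\<close>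
  define L where "L = {\<xi>. Im \<xi> = y}"
  have "L = {\<xi>. Im \<xi> \<ge> y} \<inter> {\<xi>. Im \<xi> \<le> y}"
    by (auto simp: L_def)
  then have "convex L"
    by (simp add: convex_Int convex_halfspace_Im_ge convex_halfspace_Im_le)
  moreover have "L \<inter> \<real>\<^sub>\<le>\<^sub>0 = {}"
    using True by (auto simp: L_def complex_nonpos_Reals_iff)
  moreover have "\<bar>y\<bar> \<le> norm \<xi>" if "\<xi> \<in> L" for \<xi>
    using that abs_Im_le_cmod[of \<xi>] by (simp add: L_def)
  moreover have "Complex x y \<in> L" "\<i> * complex_of_real y \<in> L"
    by (simp_all add: L_def)
  ultimately have "norm (Complex x y powr complex_of_real e - (\<i> * complex_of_real y) powr complex_of_real e)
      \<le> e * \<bar>y\<bar> powr (e - 1) * norm (Complex x y - \<i> * complex_of_real y)"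
    using True assms(1,2) by (intro norm_powr_diff_le_convex) simp_all
  also have "norm (Complex x y - \<i> * complex_of_real y) = x"
    using assms(3) by (simp add: complex_eq_iff cmod_def)
  also have "e * \<bar>y\<bar> powr (e - 1) * x \<le> x powr e"
    using True assms by (intro mult_powr_minus_one_le) auto
  finally have "Re (Complex x y powr complex_of_real e) \<le> Re ((\<i> * complex_of_real y) powr complex_of_real e) + x powr e"
    using abs_Re_le_cmod[of "Complex x y powr complex_of_real e - (\<i> * complex_of_real y) powr complex_of_real e"]
    by simp
  then have "Re (Complex x y powr complex_of_real e) \<le> cos (e * pi / 2) * \<bar>y\<bar> powr e + x powr e"
    using True by (simp add: Re_ii_mult_powr)
  then show ?thesis
    using powr_ge_zero[of x e] by linarith
next
  case False
  then have "norm (Complex x y) \<le> 2 * x"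
    using cmod_le[of "Complex x y"] assms(3) by auto
  then have "Re (Complex x y powr complex_of_real e) \<le> (2 * x) powr e"
    using Re_powr_of_real_le[of "Complex x y" e] powr_mono2[of e "norm (Complex x y)" "2 * x"] assms(1)
    by simp
  also have "\<dots> \<le> 2 * x powr e"
    using assms powr_mono[of e 1 2] by (simp add: powr_mult mult_right_mono)
  finally show ?thesis
    using cos_pi_half_mult_pos[of e] assms by (simp add: add_increasing2)
qed

lemma powr_add_le_add_powr:
  fixes a b e :: real
  assumes "0 \<le> a" "0 \<le> b" "0 < e" "e \<le> 1"
  shows "(a + b) powr e \<le> a powr e + b powr e"
proof (cases "a + b = 0")
  case False
  then have s: "0 < a + b"
    using assms by simp
  have frac_le: "t \<le> t powr e" if "0 \<le> t" "t \<le> 1" for t :: real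
    using powr_mono'[of e 1 t] that assms by simp
  have "(a + b) powr e = (a + b) powr e * (a / (a + b) + b / (a + b))"
    using s by (simp add: add_divide_distrib[symmetric])
  also have "\<dots> \<le> (a + b) powr e * ((a / (a + b)) powr e + (b / (a + b)) powr e)"
    using assms s by (intro mult_left_mono add_mono frac_le) auto
  also have "\<dots> = a powr e + b powr e"
    using s by (simp add: powr_divide distrib_left)
  finally show ?thesis .
qed (use assms in simp)

section \<open>Membership in a standard power domain\<close>

definition power_margin :: "real \<Rightarrow> real \<Rightarrow> complex \<Rightarrow> real" where
  "power_margin C e w = Re w - C * Re ((1 + w) powr complex_of_real e)"

lemma mem_std_power_domain_iff:
  "w \<in> std_power_domain C e \<longleftrightarrow> (\<exists>z. 0 < Re z \<and> w = z + complex_of_real C * (1 + z) powr complex_of_real e)"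
  by (auto simp: std_power_domain_def phiCe_def Hplane_def)

lemma cball_margin_bounds:
  assumes "0 \<le> C" "\<eta> * norm (1 + w) powr e < power_margin C e w"
    and "z \<in> cball (w - complex_of_real C * (1 + w) powr complex_of_real e) (\<eta> * norm (1 + w) powr e)"
  shows "0 < Re z" "dist w z \<le> (C + \<eta>) * norm (1 + w) powr e"
proof -
  define w0 where "w0 = w - complex_of_real C * (1 + w) powr complex_of_real e"
  have "Re w0 - Re z \<le> \<eta> * norm (1 + w) powr e"
    using assms(3) abs_Re_le_cmod[of "w0 - z"] by (simp add: w0_def dist_norm)
  then show "0 < Re z"
    using assms(2) by (simp add: w0_def power_margin_def)
  have "norm (w - w0) = C * norm (1 + w) powr e"
    using assms(1) by (simp add: w0_def norm_mult)
  then show "dist w z \<le> (C + \<eta>) * norm (1 + w) powr e"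
    using assms(3) dist_triangle[of w z w0] by (simp add: w0_def dist_norm algebra_simps)
qed

lemma mem_std_power_domain_if_margin:
  assumes "0 < C" "0 \<le> e" "e \<le> 1" "0 < \<eta>" "0 < Re w"
    and room: "(C + \<eta>) * norm (1 + w) powr e \<le> norm (1 + w) / 2"
    and contraction: "C * e * (norm (1 + w) / 2) powr (e - 1) * (C + \<eta>) \<le> \<eta>"
    and margin: "\<eta> * norm (1 + w) powr e < power_margin C e w"
  shows "w \<in> std_power_domain C e"
proof -
  define N where "N = norm (1 + w)"
  define k where "k = C * e * (N / 2) powr (e - 1)"
  define T where "T = (\<lambda>z. w - complex_of_real C * (1 + z) powr complex_of_real e)"
  define r where "r = \<eta> * N powr e"
  have near: "0 < Re z" "dist w z \<le> (C + \<eta>) * N powr e" if "z \<in> cball (T w) r" for z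
    using cball_margin_bounds[of C \<eta> w e z] that assms(1) margin by (simp_all add: T_def N_def r_def)
  have "0 \<le> k" "0 \<le> r"
    using assms(1,2,4) by (simp_all add: k_def r_def)
  have "k * (C + \<eta>) \<le> \<eta>"
    using contraction by (simp add: k_def N_def)
  then have "k * (C + \<eta>) < C + \<eta>"
    using assms(1) by linarith
  then have "k < 1"
    using assms(1,4) by (simp add: mult_less_cancel_right2)
  have in_cball: "1 + z \<in> cball (1 + w) (N / 2)" if "z \<in> cball (T w) r" for z
    using near(2)[OF that] room by (simp add: N_def dist_norm)
  have lipschitz: "dist (T x) (T y) \<le> k * dist x y"
    if "1 + x \<in> cball (1 + w) (N / 2)" "1 + y \<in> cball (1 + w) (N / 2)" for x y
  proof -
    have "norm ((1 + y) powr complex_of_real e - (1 + x) powr complex_of_real e) \<le> e * (N / 2) powr (e - 1) * dist x y"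
      using norm_powr_diff_le_cball[of "1 + w" e "1 + y" "1 + x"] that assms(2,3,5)
      by (simp add: N_def dist_norm norm_minus_commute)
    moreover have "T x - T y = complex_of_real C * ((1 + y) powr complex_of_real e - (1 + x) powr complex_of_real e)"
      by (simp add: T_def algebra_simps)
    ultimately show ?thesis
      using assms(1) by (simp add: dist_norm norm_mult k_def mult.assoc mult_left_mono)
  qed
  have "T ` cball (T w) r \<subseteq> cball (T w) r"
  proof clarify
    fix z assume z: "z \<in> cball (T w) r"
    have "dist (T w) (T z) \<le> k * dist w z"
      using lipschitz[of w z] in_cball[OF z] by (simp add: N_def)
    also have "\<dots> \<le> k * ((C + \<eta>) * N powr e)"
      using near(2)[OF z] \<open>0 \<le> k\<close> by (simp add: mult_left_mono)
    also have "\<dots> \<le> r"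
      using \<open>k * (C + \<eta>) \<le> \<eta>\<close> by (simp add: r_def mult_right_mono flip: mult.assoc)
    finally show "T z \<in> cball (T w) r"
      by simp
  qed
  then have "\<exists>!z \<in> cball (T w) r. T z = z"
    using \<open>0 \<le> k\<close> \<open>k < 1\<close> \<open>0 \<le> r\<close> lipschitz in_cball
    by (intro Banach_fix) (auto simp: complete_eq_closed)
  then obtain z where "z \<in> cball (T w) r" "T z = z"
    by blast
  then show ?thesis
    using near(1) unfolding mem_std_power_domain_iff T_def by (metis diff_add_cancel)
qed

lemma eventually_mem_std_power_domain:
  assumes "0 < C" "0 < e" "e < 1" "0 < \<eta>"
  shows "\<forall>\<^sub>F w in at_infinity. 0 < Re w \<longrightarrow> \<eta> * norm (1 + w) powr e < power_margin C e w \<longrightarrow>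
    w \<in> std_power_domain C e"
proof -
  have "\<forall>\<^sub>F N in at_top. (C + \<eta>) * N powr e \<le> N / 2"
    using assms by real_asymp
  moreover have "\<forall>\<^sub>F N in at_top. C * e * (N / 2) powr (e - 1) * (C + \<eta>) \<le> \<eta>"
    using assms by real_asymp
  ultimately have "\<forall>\<^sub>F N in at_top. (C + \<eta>) * N powr e \<le> N / 2 \<and> C * e * (N / 2) powr (e - 1) * (C + \<eta>) \<le> \<eta>"
    by (rule eventually_conj)
  then obtain N0 where N0: "\<And>N. N0 \<le> N \<Longrightarrow>
      (C + \<eta>) * N powr e \<le> N / 2 \<and> C * e * (N / 2) powr (e - 1) * (C + \<eta>) \<le> \<eta>"
    by (auto simp: eventually_at_top_linorder)
  show ?thesis
    unfolding eventually_at_infinity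
  proof (intro exI[of _ "N0 + 1"] allI impI)
    fix w :: complex assume "N0 + 1 \<le> norm w" "0 < Re w" "\<eta> * norm (1 + w) powr e < power_margin C e w"
    moreover have "norm w \<le> norm (1 + w) + 1"
      using norm_triangle_ineq4[of "1 + w" 1] by simp
    ultimately show "w \<in> std_power_domain C e"
      using N0[of "norm (1 + w)"] assms by (intro mem_std_power_domain_if_margin) auto
  qed
qed

lemma germ_subsetI:
  assumes "\<forall>\<^sub>F w in at_infinity. w \<in> A \<longrightarrow> w \<in> B"
  shows "germ_subset A B"
proof -
  obtain b where "\<And>w. b \<le> norm w \<Longrightarrow> w \<in> A \<longrightarrow> w \<in> B"
    using assms by (auto simp: eventually_at_infinity)
  then show ?thesis
    unfolding germ_subset_def by (intro exI[of _ "max b 1"]) auto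
qed

lemma germ_subset_std_power_domainI:
  assumes "0 < C" "0 < e" "e < 1" "0 < \<theta>" "0 < K" "eventually Q at_top"
    and bound: "\<And>w. w \<in> S \<Longrightarrow> \<exists>A. norm (1 + w) \<le> K * A \<and>
      (Q A \<longrightarrow> 0 < Re w \<and> \<theta> * A powr e < power_margin C e w)"
  shows "germ_subset S (std_power_domain C e)"
proof (rule germ_subsetI)
  define \<eta> where "\<eta> = \<theta> / K powr e"
  have "0 < \<eta>"
    using assms(4,5) by (simp add: \<eta>_def)
  obtain A0 where A0: "\<And>A. A0 \<le> A \<Longrightarrow> Q A"
    using assms(6) by (auto simp: eventually_at_top_linorder)
  have "\<forall>\<^sub>F w in at_infinity. w \<in> S \<longrightarrow> 0 < Re w \<and> \<eta> * norm (1 + w) powr e < power_margin C e w"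
    unfolding eventually_at_infinity
  proof (intro exI[of _ "K * A0 + 2"] allI impI)
    fix w :: complex assume "K * A0 + 2 \<le> norm w" "w \<in> S"
    obtain A where "norm (1 + w) \<le> K * A"
      and A: "Q A \<longrightarrow> 0 < Re w \<and> \<theta> * A powr e < power_margin C e w"
      using bound[OF \<open>w \<in> S\<close>] by blast
    moreover have "norm w \<le> norm (1 + w) + 1"
      using norm_triangle_ineq4[of "1 + w" 1] by simp
    ultimately have "K * A0 \<le> K * A"
      using \<open>K * A0 + 2 \<le> norm w\<close> by linarith
    then have "0 < Re w" "\<theta> * A powr e < power_margin C e w"
      using A A0[of A] assms(5) by simp_all
    have "0 \<le> K * A"
      using \<open>norm (1 + w) \<le> K * A\<close> norm_ge_zero[of "1 + w"] by linarith
    then have "0 \<le> A"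
      using assms(5) by (simp add: zero_le_mult_iff)
    then have "norm (1 + w) powr e \<le> K powr e * A powr e"
      using \<open>norm (1 + w) \<le> K * A\<close> assms(2,5) by (simp add: powr_mono2 flip: powr_mult)
    then have "\<eta> * norm (1 + w) powr e \<le> \<theta> * A powr e"
      using assms(4,5) by (simp add: \<eta>_def divide_simps mult.commute mult_left_mono)
    with \<open>0 < Re w\<close> \<open>\<theta> * A powr e < power_margin C e w\<close>
    show "0 < Re w \<and> \<eta> * norm (1 + w) powr e < power_margin C e w"
      by simp
  qed
  then show "\<forall>\<^sub>F w in at_infinity. w \<in> S \<longrightarrow> w \<in> std_power_domain C e"
    using eventually_mem_std_power_domain[OF assms(1-3) \<open>0 < \<eta>\<close>] by eventually_elim blast
qed

section \<open>Tubes and dilations\<close>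

lemma std_power_domain_nonempty: "std_power_domain C e \<noteq> {}"
  by (auto simp: std_power_domain_def Hplane_def intro!: exI[of _ 1])

lemma mem_tubeE:
  assumes "w \<in> tube A \<delta>" "A \<noteq> {}" \<comment> \<open>\<open>infdist\<close> to the empty set is 0, so its tube is everything\<close>
  obtains u where "u \<in> A" "norm (w - u) < \<delta>"
proof -
  have "(INF u\<in>A. dist w u) < \<delta>"
    using assms by (simp add: tube_def infdist_notempty)
  moreover have "bdd_below ((\<lambda>u. dist w u) ` A)"
    by (rule bdd_belowI[of _ 0]) auto
  ultimately show ?thesis
    using assms(2) that by (auto simp: cINF_less_iff dist_norm)
qed

lemma one_le_norm_one_plus: "0 < Re z \<Longrightarrow> 1 \<le> norm (1 + z)"
  using complex_Re_le_cmod[of "1 + z"] by simp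

lemma tube_std_power_domainE:
  assumes "w \<in> tube (std_power_domain D e) \<delta>" "0 \<le> D"
  obtains z where "0 < Re z" "norm (w - z) \<le> D * norm (1 + z) powr e + \<delta>"
    "Re z + D * Re ((1 + z) powr complex_of_real e) - \<delta> \<le> Re w"
proof -
  obtain u where "u \<in> std_power_domain D e" and wu: "norm (w - u) < \<delta>"
    using assms(1) std_power_domain_nonempty by (blast elim: mem_tubeE)
  then obtain z where z: "0 < Re z" "u = z + complex_of_real D * (1 + z) powr complex_of_real e"
    by (auto simp: mem_std_power_domain_iff)
  have "w - z = complex_of_real D * (1 + z) powr complex_of_real e + (w - u)"
    using z by simp
  also have "norm \<dots> \<le> norm (complex_of_real D * (1 + z) powr complex_of_real e) + norm (w - u)"
    by (rule norm_triangle_ineq)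
  finally have "norm (w - z) \<le> D * norm (1 + z) powr e + \<delta>"
    using wu assms(2) by (simp add: norm_mult)
  moreover have "Re z + D * Re ((1 + z) powr complex_of_real e) - \<delta> \<le> Re w"
    using abs_Re_le_cmod[of "w - u"] wu z by simp
  ultimately show ?thesis
    using that z(1) by blast
qed

lemma norm_le_of_close:
  fixes a b :: complex
  assumes "0 \<le> \<rho>" "0 \<le> \<mu>" "0 \<le> \<beta>" "e \<le> 1" "1 \<le> norm a"
    and "norm (b - complex_of_real \<rho> * a) \<le> \<mu> * norm a powr e + \<beta>"
  shows "norm b \<le> (\<rho> + \<mu> + \<beta>) * norm a"
proof -
  have "norm b \<le> norm (complex_of_real \<rho> * a) + norm (b - complex_of_real \<rho> * a)"
    by (rule norm_triangle_sub)
  also have "\<dots> \<le> \<rho> * norm a + \<mu> * norm a powr e + \<beta>"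
    using assms(1,6) by (simp add: norm_mult)
  also have "\<dots> \<le> \<rho> * norm a + \<mu> * norm a + \<beta> * norm a"
    using assms powr_mono[of e 1 "norm a"] mult_left_mono[of 1 "norm a" \<beta>]
    by (intro add_mono mult_left_mono) auto
  finally show ?thesis
    by (simp add: algebra_simps)
qed

lemma germ_subset_tube_std_power_domain_exponent:
  assumes "0 < C" "0 < e" "e < e'" "e' < 1" "0 < D" "0 < \<delta>"
  shows "germ_subset (tube (std_power_domain D e') \<delta>) (std_power_domain C e)"
proof -
  define K where "K = 1 + D + \<delta>"
  define c where "c = cos (e' * pi / 2)"
  have "0 < c" "0 < K" "e < 1"
    using cos_pi_half_mult_pos[of e'] assms by (auto simp: c_def K_def)
  have "\<forall>\<^sub>F A in at_top. \<delta> + C * K powr e * A powr e + A powr e < D * c * A powr e'"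
    using assms \<open>0 < c\<close> \<open>0 < K\<close> by real_asymp
  then show ?thesis
  proof (rule germ_subset_std_power_domainI[OF assms(1,2) \<open>e < 1\<close> zero_less_one \<open>0 < K\<close>])
    fix w assume "w \<in> tube (std_power_domain D e') \<delta>"
    then obtain z where z: "0 < Re z" and close: "norm (w - z) \<le> D * norm (1 + z) powr e' + \<delta>"
      and Re_w: "Re z + D * Re ((1 + z) powr complex_of_real e') - \<delta> \<le> Re w"
      using assms(5) by (auto elim: tube_std_power_domainE)
    define A where "A = norm (1 + z)"
    have "1 \<le> A"
      using z by (simp add: A_def one_le_norm_one_plus)
    have "norm (1 + w) \<le> K * A"
      using norm_le_of_close[of 1 D \<delta> e' "1 + z" "1 + w"] close assms \<open>1 \<le> A\<close>
      by (simp add: K_def A_def)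
    moreover have "0 < Re w \<and> 1 * A powr e < power_margin C e w"
      if Q: "\<delta> + C * K powr e * A powr e + A powr e < D * c * A powr e'"
    proof -
      have "D * (c * A powr e') \<le> D * Re ((1 + z) powr complex_of_real e')"
        using Re_powr_of_real_ge[of e' "1 + z"] z assms by (simp add: A_def c_def)
      have "norm (1 + w) powr e \<le> K powr e * A powr e"
        using \<open>norm (1 + w) \<le> K * A\<close> \<open>0 < K\<close> \<open>1 \<le> A\<close> assms(2)
        by (simp add: powr_mono2 flip: powr_mult)
      then have "C * Re ((1 + w) powr complex_of_real e) \<le> C * K powr e * A powr e"
        using Re_powr_of_real_le[of "1 + w" e] assms(1) by (simp add: mult_left_mono mult.assoc)
      moreover have "0 \<le> C * K powr e * A powr e + A powr e"
        using assms(1) by simp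
      ultimately show ?thesis
        using Q Re_w z \<open>D * (c * A powr e') \<le> _\<close> by (simp add: power_margin_def)
    qed
    ultimately show "\<exists>A. norm (1 + w) \<le> K * A \<and> (\<delta> + C * K powr e * A powr e + A powr e < D * c * A powr e'
      \<longrightarrow> 0 < Re w \<and> 1 * A powr e < power_margin C e w)"
      by blast
  qed
qed

lemma Re_powr_le_perturb:
  assumes "0 \<le> Re a" "0 \<le> e" "e \<le> 1" "norm (v - a) \<le> norm a / 2"
  shows "Re (v powr complex_of_real e) \<le> Re (a powr complex_of_real e) + e * (norm a / 2) powr (e - 1) * norm (v - a)"
  using norm_powr_diff_le_cball[of a e v a] abs_Re_le_cmod[of "v powr complex_of_real e - a powr complex_of_real e"] assms
  by (simp add: dist_norm norm_minus_commute)

lemma powr_of_real_mult: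
  assumes "0 \<le> \<mu>"
  shows "(complex_of_real \<mu> * u) powr complex_of_real e = complex_of_real (\<mu> powr e) * u powr complex_of_real e"
  using assms by (simp add: powr_times_real_left powr_of_real)

lemma power_margin_perturbed_ge:
  assumes "0 \<le> C" "0 \<le> e" "e \<le> 1" "0 < \<rho>" "0 < Re z" "C * \<rho> powr e \<le> \<mu>"
    and close: "norm (1 + w - complex_of_real \<rho> * (1 + z)) \<le> \<mu> * norm (1 + z) powr e + \<beta>"
    and room: "\<mu> * norm (1 + z) powr e + \<beta> \<le> \<rho> * norm (1 + z) / 2"
    and Re_w: "\<rho> * Re z + \<mu> * Re ((1 + z) powr complex_of_real e) - \<beta> \<le> Re w"
  shows "(\<mu> - C * \<rho> powr e) * cos (e * pi / 2) * norm (1 + z) powr e - \<beta>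
      - C * e * ((\<rho> * norm (1 + z) / 2) powr (e - 1) * (\<mu> * norm (1 + z) powr e + \<beta>))
    \<le> power_margin C e w"
proof -
  define a where "a = complex_of_real \<rho> * (1 + z)"
  define P where "P = Re ((1 + z) powr complex_of_real e)"
  define E where "E = e * ((\<rho> * norm (1 + z) / 2) powr (e - 1) * (\<mu> * norm (1 + z) powr e + \<beta>))"
  have "norm a = \<rho> * norm (1 + z)"
    using assms(4) by (simp add: a_def norm_mult)
  have "norm (1 + w - a) \<le> norm a / 2"
    using close room unfolding \<open>norm a = \<rho> * norm (1 + z)\<close> by (simp add: a_def)
  then have "Re ((1 + w) powr complex_of_real e)
      \<le> Re (a powr complex_of_real e) + e * (norm a / 2) powr (e - 1) * norm (1 + w - a)"
    using assms(2-5) by (intro Re_powr_le_perturb) (auto simp: a_def)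
  moreover have "Re (a powr complex_of_real e) = \<rho> powr e * P"
    using assms(4) by (simp add: a_def P_def powr_of_real_mult)
  moreover have "e * (norm a / 2) powr (e - 1) * norm (1 + w - a) \<le> E"
    unfolding E_def \<open>norm a = \<rho> * norm (1 + z)\<close>
    using mult_left_mono[OF close, of "e * (\<rho> * norm (1 + z) / 2) powr (e - 1)"] assms(2)
    by (simp add: a_def mult.assoc)
  ultimately have "Re ((1 + w) powr complex_of_real e) \<le> \<rho> powr e * P + E"
    by linarith
  then have "C * Re ((1 + w) powr complex_of_real e) \<le> C * \<rho> powr e * P + C * E"
    using mult_left_mono[OF _ assms(1)] by (fastforce simp: distrib_left mult.assoc)
  moreover have "(\<mu> - C * \<rho> powr e) * (cos (e * pi / 2) * norm (1 + z) powr e) \<le> (\<mu> - C * \<rho> powr e) * P"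
    using Re_powr_of_real_ge[of e "1 + z"] assms by (intro mult_left_mono) (auto simp: P_def)
  moreover have "(\<mu> - C * \<rho> powr e) * P = \<mu> * P - C * \<rho> powr e * P"
    by (simp add: algebra_simps)
  moreover have "0 \<le> \<rho> * Re z"
    using assms(4,5) by simp
  ultimately show ?thesis
    using Re_w unfolding power_margin_def E_def P_def by (simp only: mult.assoc)
qed

lemma eventually_perturbation_small:
  fixes e \<rho> \<mu> \<beta> g B :: real
  assumes "0 < e" "e < 1" "0 < \<rho>" "0 < \<mu>" "0 \<le> \<beta>" "0 < g" "0 \<le> B"
  shows "\<forall>\<^sub>F A in at_top. \<beta> + B * ((\<rho> * A / 2) powr (e - 1) * (\<mu> * A powr e + \<beta>)) < g * A powr e"
proof -
  define f where "f A = (\<rho> * A / 2) powr (e - 1) * (\<mu> * A powr e + \<beta>)" for A :: real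
  have "f \<in> o(\<lambda>A. A powr e)"
    using assms unfolding f_def by real_asymp
  then have "\<forall>\<^sub>F A in at_top. norm (f A) \<le> g / (2 * (B + 1)) * norm (A powr e)"
    using assms by (intro landau_o.smallD) auto
  moreover have "\<forall>\<^sub>F A in at_top. \<beta> < g / 2 * A powr e"
    using assms by real_asymp
  ultimately show ?thesis
  proof eventually_elim
    case (elim A)
    have "f A \<le> g / (2 * (B + 1)) * A powr e"
      using elim(1) abs_ge_self[of "f A"] by simp
    then have "B * f A \<le> B * (g / (2 * (B + 1))) * A powr e"
      using assms(7) mult_left_mono by (fastforce simp: mult.assoc)
    also have "\<dots> \<le> g / 2 * A powr e"
    proof (rule mult_right_mono)
      show "B * (g / (2 * (B + 1))) \<le> g / 2"
        using assms by (simp add: field_simps)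
    qed simp
    finally show ?case
      using elim(2) by (simp add: f_def)
  qed
qed

text \<open>The tube inclusion (2) has this shape with \<open>\<rho> = 1, \<mu> = D, \<beta> = \<delta>\<close>, the dilation
  inclusion (3) with \<open>\<rho> = \<nu>, \<mu> = \<nu> C, \<beta> = \<bar>1 - \<nu>\<bar>\<close>.\<close>

lemma germ_subset_std_power_domain_perturbed:
  assumes "0 < C" "0 < e" "e < 1" "0 < \<rho>" "0 < \<mu>" "0 \<le> \<beta>" "C * \<rho> powr e < \<mu>"
    and near: "\<And>w. w \<in> S \<Longrightarrow> \<exists>z. 0 < Re z
      \<and> norm (1 + w - complex_of_real \<rho> * (1 + z)) \<le> \<mu> * norm (1 + z) powr e + \<beta>
      \<and> \<rho> * Re z + \<mu> * Re ((1 + z) powr complex_of_real e) - \<beta> \<le> Re w"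
  shows "germ_subset S (std_power_domain C e)"
proof -
  define c where "c = cos (e * pi / 2)"
  define g where "g = (\<mu> - C * \<rho> powr e) * c"
  define Q where "Q A \<longleftrightarrow> \<mu> * A powr e + \<beta> \<le> \<rho> * A / 2
    \<and> \<beta> + C * e * ((\<rho> * A / 2) powr (e - 1) * (\<mu> * A powr e + \<beta>)) < g / 2 * A powr e" for A
  have "0 < c"
    using cos_pi_half_mult_pos[of e] assms by (simp add: c_def)
  then have "0 < g / 2" "g \<le> \<mu> * c" "0 < \<rho> + \<mu> + \<beta>"
    using assms by (simp_all add: g_def)
  have "\<forall>\<^sub>F A in at_top. \<mu> * A powr e + \<beta> \<le> \<rho> * A / 2"
    using assms by real_asymp
  moreover have "\<forall>\<^sub>F A in at_top. \<beta> + C * e * ((\<rho> * A / 2) powr (e - 1) * (\<mu> * A powr e + \<beta>)) < g / 2 * A powr e"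
    using assms \<open>0 < g / 2\<close> by (intro eventually_perturbation_small) auto
  ultimately have "eventually Q at_top"
    unfolding Q_def by (rule eventually_conj)
  then show ?thesis
  proof (rule germ_subset_std_power_domainI[OF assms(1-3) \<open>0 < g / 2\<close> \<open>0 < \<rho> + \<mu> + \<beta>\<close>])
    fix w assume "w \<in> S"
    then obtain z where z: "0 < Re z"
      and close: "norm (1 + w - complex_of_real \<rho> * (1 + z)) \<le> \<mu> * norm (1 + z) powr e + \<beta>"
      and Re_w: "\<rho> * Re z + \<mu> * Re ((1 + z) powr complex_of_real e) - \<beta> \<le> Re w"
      using near by blast
    define A where "A = norm (1 + z)"
    have "1 \<le> A"
      using z by (simp add: A_def one_le_norm_one_plus)
    have "norm (1 + w) \<le> (\<rho> + \<mu> + \<beta>) * A"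
      using norm_le_of_close[of \<rho> \<mu> \<beta> e "1 + z" "1 + w"] close assms \<open>1 \<le> A\<close> by (simp add: A_def)
    moreover have "0 < Re w \<and> g / 2 * A powr e < power_margin C e w" if "Q A"
    proof -
      have room: "\<mu> * A powr e + \<beta> \<le> \<rho> * A / 2"
        and small: "\<beta> + C * e * ((\<rho> * A / 2) powr (e - 1) * (\<mu> * A powr e + \<beta>)) < g / 2 * A powr e"
        using \<open>Q A\<close> by (simp_all add: Q_def)
      have "g * A powr e - \<beta> - C * e * ((\<rho> * A / 2) powr (e - 1) * (\<mu> * A powr e + \<beta>)) \<le> power_margin C e w"
        using power_margin_perturbed_ge[of C e \<rho> z \<mu> w \<beta>] assms z close room Re_w
        by (simp add: A_def g_def c_def)
      moreover have "\<mu> * (c * A powr e) \<le> \<mu> * Re ((1 + z) powr complex_of_real e)"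
        using Re_powr_of_real_ge[of e "1 + z"] assms z by (simp add: A_def c_def)
      moreover have "g * A powr e \<le> \<mu> * (c * A powr e)"
        using mult_right_mono[OF \<open>g \<le> \<mu> * c\<close>, of "A powr e"] by (simp add: mult.assoc)
      moreover have "0 \<le> \<rho> * Re z" "0 \<le> g * A powr e" "0 \<le> C * e * ((\<rho> * A / 2) powr (e - 1) * (\<mu> * A powr e + \<beta>))"
        using assms z \<open>0 < g / 2\<close> by simp_all
      ultimately show ?thesis
        using small Re_w by (intro conjI) linarith+
    qed
    ultimately show "\<exists>A. norm (1 + w) \<le> (\<rho> + \<mu> + \<beta>) * A \<and> (Q A \<longrightarrow> 0 < Re w \<and> g / 2 * A powr e < power_margin C e w)"
      by blast
  qed
qed

lemma germ_subset_tube_std_power_domain_constant: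
  assumes "0 < C" "C < D" "0 < e" "e < 1" "0 < \<delta>"
  shows "germ_subset (tube (std_power_domain D e) \<delta>) (std_power_domain C e)"
proof (rule germ_subset_std_power_domain_perturbed[of C e 1 D \<delta>])
  fix w assume "w \<in> tube (std_power_domain D e) \<delta>"
  then obtain z where "0 < Re z" "norm (w - z) \<le> D * norm (1 + z) powr e + \<delta>"
    "Re z + D * Re ((1 + z) powr complex_of_real e) - \<delta> \<le> Re w"
    using assms by (auto elim: tube_std_power_domainE)
  then show "\<exists>z. 0 < Re z
      \<and> norm (1 + w - complex_of_real 1 * (1 + z)) \<le> D * norm (1 + z) powr e + \<delta>
      \<and> 1 * Re z + D * Re ((1 + z) powr complex_of_real e) - \<delta> \<le> Re w"
    by auto
qed (use assms in auto)

lemma germ_subset_scaled_std_power_domain: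
  assumes "0 < C" "0 < C'" "0 < e" "e < 1" "0 < \<nu>" "C' * \<nu> powr e < \<nu> * C"
  shows "germ_subset ((\<lambda>z. complex_of_real \<nu> * z) ` std_power_domain C e) (std_power_domain C' e)"
proof (rule germ_subset_std_power_domain_perturbed[of C' e \<nu> "\<nu> * C" "\<bar>1 - \<nu>\<bar>"])
  fix w assume "w \<in> (\<lambda>z. complex_of_real \<nu> * z) ` std_power_domain C e"
  then obtain z where z: "0 < Re z"
    and w: "w = complex_of_real \<nu> * (z + complex_of_real C * (1 + z) powr complex_of_real e)"
    by (auto simp: mem_std_power_domain_iff)
  have "1 + w - complex_of_real \<nu> * (1 + z)
      = complex_of_real (1 - \<nu>) + complex_of_real (\<nu> * C) * (1 + z) powr complex_of_real e"
    by (simp add: w algebra_simps)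
  also have "norm \<dots> \<le> norm (complex_of_real (1 - \<nu>)) + norm (complex_of_real (\<nu> * C) * (1 + z) powr complex_of_real e)"
    by (rule norm_triangle_ineq)
  also have "norm (complex_of_real (1 - \<nu>)) = \<bar>1 - \<nu>\<bar>"
    by (rule norm_of_real)
  finally have "norm (1 + w - complex_of_real \<nu> * (1 + z)) \<le> \<nu> * C * norm (1 + z) powr e + \<bar>1 - \<nu>\<bar>"
    using assms by (simp add: norm_mult)
  moreover have "\<nu> * Re z + \<nu> * C * Re ((1 + z) powr complex_of_real e) - \<bar>1 - \<nu>\<bar> \<le> Re w"
    by (simp add: w algebra_simps)
  ultimately show "\<exists>z. 0 < Re z
      \<and> norm (1 + w - complex_of_real \<nu> * (1 + z)) \<le> \<nu> * C * norm (1 + z) powr e + \<bar>1 - \<nu>\<bar>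
      \<and> \<nu> * Re z + \<nu> * C * Re ((1 + z) powr complex_of_real e) - \<bar>1 - \<nu>\<bar> \<le> Re w"
    using z by blast
qed (use assms in auto)

lemma subset_imp_germ_subset: "A \<subseteq> B \<Longrightarrow> germ_subset A B"
  unfolding germ_subset_def by (intro exI[of _ 1]) auto

lemma germ_subset_scaled_le_one:
  assumes "0 < C" "0 < e" "e < 1" "0 < \<nu>" "\<nu> \<le> 1"
  shows "germ_subset ((\<lambda>z. complex_of_real \<nu> * z) ` std_power_domain C e) (std_power_domain (\<nu> * C) e)"
proof (cases "\<nu> = 1")
  case False
  then have "\<nu> powr e < 1"
    using assms powr_less_mono2[of e \<nu> 1] by simp
  then have "\<nu> * C * \<nu> powr e < \<nu> * C"
    using assms by simp
  then show ?thesis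
    using assms by (intro germ_subset_scaled_std_power_domain) auto
qed (simp add: subset_imp_germ_subset)

lemma germ_subset_scaled_ge_one:
  assumes "0 < C" "0 < e" "e < 1" "1 \<le> \<nu>"
  shows "germ_subset ((\<lambda>z. complex_of_real \<nu> * z) ` std_power_domain C e) (std_power_domain C e)"
proof (cases "\<nu> = 1")
  case False
  then have "\<nu> powr e < \<nu> powr 1"
    using assms by (intro powr_less_mono) auto
  then have "C * \<nu> powr e < \<nu> * C"
    using assms by (simp add: mult.commute)
  then show ?thesis
    using assms by (intro germ_subset_scaled_std_power_domain) auto
qed (simp add: subset_imp_germ_subset)

section \<open>Sums\<close>

lemma powr_le_linear_plus_const:
  fixes C e :: real
  assumes "0 < C" "0 \<le> e" "e < 1"
  obtains L where "\<And>s. 0 \<le> s \<Longrightarrow> C * (1 + s) powr e \<le> s + L"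
proof -
  have "\<forall>\<^sub>F s in at_top. C * (1 + s) powr e \<le> s"
    using assms by real_asymp
  then obtain s0 where s0: "\<And>s. s0 \<le> s \<Longrightarrow> C * (1 + s) powr e \<le> s"
    by (auto simp: eventually_at_top_linorder)
  have "C * (1 + s) powr e \<le> s + C * (1 + max s0 0) powr e" if "0 \<le> s" for s
  proof (cases "s0 \<le> s")
    case False
    then have "(1 + s) powr e \<le> (1 + max s0 0) powr e"
      using that assms by (intro powr_mono2) auto
    then have "C * (1 + s) powr e \<le> C * (1 + max s0 0) powr e"
      using assms(1) by simp
    with that show ?thesis
      by linarith
  next
    case True
    have "0 \<le> C * (1 + max s0 0) powr e"
      using assms(1) by simp
    then show ?thesis
      using s0[OF True] by linarith
  qed
  then show ?thesis
    using that by blast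
qed

lemma Re_phiCe_ge:
  assumes "0 \<le> C" "0 \<le> e" "e \<le> 2" "0 < Re z"
  shows "Re z + C * cos (e * pi / 2) * norm (1 + z) powr e \<le> Re (phiCe C e z)"
  using mult_left_mono[OF Re_powr_of_real_ge[OF assms(2-3), of "1 + z"] assms(1)] assms(4)
  by (simp add: phiCe_def mult.assoc)

lemma one_plus_sum_phiCe_bounds:
  fixes C e :: real
  assumes "0 \<le> C" "0 < e" "e < 1" "0 < Re z1" "0 < Re z2"
  defines "S \<equiv> norm (1 + z1) powr e + norm (1 + z2) powr e" and "w \<equiv> phiCe C e z1 + phiCe C e z2"
  shows "0 \<le> Re (1 + w)" "Re (1 + w) \<le> 1 + (Re z1 + Re z2) + C * S"
    "\<bar>Im (1 + w)\<bar> \<le> \<bar>Im z1\<bar> + \<bar>Im z2\<bar> + C * S"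
proof -
  define P1 P2 where "P1 = (1 + z1) powr complex_of_real e" and "P2 = (1 + z2) powr complex_of_real e"
  have "0 \<le> C * cos (e * pi / 2) * norm (1 + z1) powr e" "0 \<le> C * cos (e * pi / 2) * norm (1 + z2) powr e"
    using cos_pi_half_mult_pos[of e] assms(1-3) by simp_all
  then show "0 \<le> Re (1 + w)"
    using Re_phiCe_ge[of C e z1] Re_phiCe_ge[of C e z2] assms(1-5) by (simp add: w_def)
  have "Re P1 + Re P2 \<le> S" "\<bar>Im P1 + Im P2\<bar> \<le> S"
    using complex_Re_le_cmod[of P1] complex_Re_le_cmod[of P2] abs_Im_le_cmod[of P1] abs_Im_le_cmod[of P2]
    by (auto simp: P1_def P2_def S_def)
  then have "C * (Re P1 + Re P2) \<le> C * S" "\<bar>C * (Im P1 + Im P2)\<bar> \<le> C * S"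
    using assms(1) by (auto simp: abs_mult mult_left_mono)
  moreover have "Re (1 + w) = 1 + (Re z1 + Re z2) + C * (Re P1 + Re P2)"
    "Im (1 + w) = (Im z1 + Im z2) + C * (Im P1 + Im P2)"
    by (simp_all add: w_def phiCe_def P1_def P2_def distrib_left)
  ultimately show "Re (1 + w) \<le> 1 + (Re z1 + Re z2) + C * S"
    "\<bar>Im (1 + w)\<bar> \<le> \<bar>Im z1\<bar> + \<bar>Im z2\<bar> + C * S"
    using abs_triangle_ineq[of "Im z1 + Im z2" "C * (Im P1 + Im P2)"] abs_triangle_ineq[of "Im z1" "Im z2"]
    by simp_all
qed

lemma Re_powr_one_plus_sum_le:
  fixes C e :: real
  assumes "0 \<le> C" "0 < e" "e < 1" "0 < Re z1" "0 < Re z2"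
  defines "S \<equiv> norm (1 + z1) powr e + norm (1 + z2) powr e" and "s \<equiv> Re z1 + Re z2"
    and "c \<equiv> cos (e * pi / 2)"
  shows "Re ((1 + (phiCe C e z1 + phiCe C e z2)) powr complex_of_real e)
    \<le> 2 * (1 + s) powr e + c * S + (2 + c) * (C * S) powr e"
proof -
  define X Y where "X = Re (1 + (phiCe C e z1 + phiCe C e z2))" and "Y = Im (1 + (phiCe C e z1 + phiCe C e z2))"
  note bounds = one_plus_sum_phiCe_bounds[OF assms(1-5), folded X_def Y_def S_def s_def]
  have "0 < c"
    using cos_pi_half_mult_pos[of e] assms by (simp add: c_def)
  have "X powr e \<le> ((1 + s) + C * S) powr e"
    using bounds(1,2) assms(2) by (simp add: powr_mono2)
  also have "\<dots> \<le> (1 + s) powr e + (C * S) powr e"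
    using assms by (intro powr_add_le_add_powr) (auto simp: s_def S_def)
  finally have X_bound: "X powr e \<le> (1 + s) powr e + (C * S) powr e" .
  have "\<bar>Y\<bar> powr e \<le> ((\<bar>Im z1\<bar> + \<bar>Im z2\<bar>) + C * S) powr e"
    using bounds(3) assms(2) by (simp add: powr_mono2)
  also have "\<dots> \<le> \<bar>Im z1\<bar> powr e + \<bar>Im z2\<bar> powr e + (C * S) powr e"
    using assms powr_add_le_add_powr[of "\<bar>Im z1\<bar>" "\<bar>Im z2\<bar>" e]
      powr_add_le_add_powr[of "\<bar>Im z1\<bar> + \<bar>Im z2\<bar>" "C * S" e]
    by (simp add: S_def)
  also have "\<dots> \<le> S + (C * S) powr e"
    using abs_Im_le_cmod[of "1 + z1"] abs_Im_le_cmod[of "1 + z2"] assms(2)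
      powr_mono2[of e "\<bar>Im z1\<bar>" "norm (1 + z1)"] powr_mono2[of e "\<bar>Im z2\<bar>" "norm (1 + z2)"]
    by (simp add: S_def)
  finally have Y_bound: "\<bar>Y\<bar> powr e \<le> S + (C * S) powr e" .
  have "Complex X Y = 1 + (phiCe C e z1 + phiCe C e z2)"
    by (simp add: X_def Y_def complex_eq_iff)
  then have "Re ((1 + (phiCe C e z1 + phiCe C e z2)) powr complex_of_real e) \<le> 2 * X powr e + c * \<bar>Y\<bar> powr e"
    using Re_Complex_powr_le[OF assms(2,3) bounds(1), of Y] by (simp add: c_def)
  also have "\<dots> \<le> 2 * ((1 + s) powr e + (C * S) powr e) + c * (S + (C * S) powr e)"
    using X_bound Y_bound \<open>0 < c\<close> by (intro add_mono mult_left_mono) auto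
  finally show ?thesis
    by (simp add: algebra_simps)
qed

lemma power_margin_half_sum_gt:
  fixes C e L :: real
  assumes "0 \<le> C" "0 < e" "e < 1" "0 < Re z1" "0 < Re z2"
    and "C * (1 + (Re z1 + Re z2)) powr e \<le> Re z1 + Re z2 + L"
  defines "S \<equiv> norm (1 + z1) powr e + norm (1 + z2) powr e" and "c \<equiv> cos (e * pi / 2)"
  assumes small: "L < C * c / 8 * S" "C * (1 + c / 2) * (C * S) powr e < C * c / 4 * S"
  shows "0 < Re (phiCe C e z1 + phiCe C e z2)"
    "C * c / 8 * S < power_margin (C / 2) e (phiCe C e z1 + phiCe C e z2)"
proof -
  have "Re z1 + Re z2 + C * c * S \<le> Re (phiCe C e z1 + phiCe C e z2)"
    using Re_phiCe_ge[of C e z1] Re_phiCe_ge[of C e z2] assms(1-5)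
    by (simp add: S_def c_def algebra_simps)
  moreover have "0 \<le> C * c * S"
    using cos_pi_half_mult_pos[of e] assms(1-3) by (simp add: S_def c_def)
  ultimately show "0 < Re (phiCe C e z1 + phiCe C e z2)"
    using assms(4,5) by linarith
  have "C / 2 * Re ((1 + (phiCe C e z1 + phiCe C e z2)) powr complex_of_real e)
      \<le> C / 2 * (2 * (1 + (Re z1 + Re z2)) powr e + c * S + (2 + c) * (C * S) powr e)"
    using Re_powr_one_plus_sum_le[OF assms(1-5)] assms(1) by (simp add: S_def c_def mult_left_mono)
  also have "\<dots> = C * (1 + (Re z1 + Re z2)) powr e + C * c / 2 * S + C * (1 + c / 2) * (C * S) powr e"
    by (simp add: algebra_simps)
  finally show "C * c / 8 * S < power_margin (C / 2) e (phiCe C e z1 + phiCe C e z2)"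
    using \<open>Re z1 + Re z2 + C * c * S \<le> _\<close> assms(6) small
    unfolding power_margin_def by (simp add: field_simps)
qed

lemma norm_one_plus_sum_phiCe_le:
  assumes "0 \<le> C" "0 \<le> e" "e \<le> 1" "0 < Re z1" "0 < Re z2"
  shows "norm (1 + (phiCe C e z1 + phiCe C e z2)) \<le> (2 + C) * (norm (1 + z1) + norm (1 + z2))"
proof -
  define A1 A2 where "A1 = norm (1 + z1)" and "A2 = norm (1 + z2)"
  have "1 \<le> A1" "1 \<le> A2"
    using assms by (simp_all add: A1_def A2_def one_le_norm_one_plus)
  have "1 + (phiCe C e z1 + phiCe C e z2) = (1 + z1) + (1 + z2) + (complex_of_real C * (1 + z1) powr complex_of_real e
      + complex_of_real C * (1 + z2) powr complex_of_real e) - 1"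
    by (simp add: phiCe_def)
  also have "norm \<dots> \<le> norm ((1 + z1) + (1 + z2) + (complex_of_real C * (1 + z1) powr complex_of_real e
      + complex_of_real C * (1 + z2) powr complex_of_real e)) + norm (1 :: complex)"
    by (rule norm_triangle_ineq4)
  also have "\<dots> \<le> norm (1 + z1) + norm (1 + z2) + (norm (complex_of_real C * (1 + z1) powr complex_of_real e)
      + norm (complex_of_real C * (1 + z2) powr complex_of_real e)) + 1"
    by (intro add_right_mono norm_triangle_ineq norm_triangle_le add_mono) simp
  also have "\<dots> = A1 + A2 + (C * A1 powr e + C * A2 powr e) + 1"
    using assms(1) by (simp add: A1_def A2_def norm_mult)
  also have "\<dots> \<le> (2 + C) * (A1 + A2)"
    using \<open>1 \<le> A1\<close> \<open>1 \<le> A2\<close> powr_mono[of e 1 A1] powr_mono[of e 1 A2] assms(1,3)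
      mult_left_mono[of "A1 powr e" A1 C] mult_left_mono[of "A2 powr e" A2 C]
    by (simp add: algebra_simps)
  finally show ?thesis
    by (simp add: A1_def A2_def)
qed

lemma germ_subset_sum_std_power_domain:
  assumes "0 < C" "0 < e" "e < 1"
  shows "germ_subset {x + y | x y. x \<in> std_power_domain C e \<and> y \<in> std_power_domain C e}
    (std_power_domain (C / 2) e)"
proof -
  define c where "c = cos (e * pi / 2)"
  obtain L where L: "\<And>s. 0 \<le> s \<Longrightarrow> C * (1 + s) powr e \<le> s + L"
    using powr_le_linear_plus_const[of C e] assms by auto
  define Q where "Q A \<longleftrightarrow> (\<forall>t \<ge> A powr e. L < C * c / 8 * t \<and> C * (1 + c / 2) * (C * t) powr e < C * c / 4 * t)"
    for A :: real
  have "0 < c" "0 < C / 2" "0 < C * c / 8" "0 < 2 + C"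
    using cos_pi_half_mult_pos[of e] assms by (simp_all add: c_def)
  have "\<forall>\<^sub>F t in at_top. L < C * c / 8 * t"
    using assms \<open>0 < c\<close> by real_asymp
  moreover have "\<forall>\<^sub>F t in at_top. C * (1 + c / 2) * (C * t) powr e < C * c / 4 * t"
    using assms \<open>0 < c\<close> by real_asymp
  ultimately have "\<forall>\<^sub>F t in at_top. L < C * c / 8 * t \<and> C * (1 + c / 2) * (C * t) powr e < C * c / 4 * t"
    by (rule eventually_conj)
  moreover have "filterlim (\<lambda>A::real. A powr e) at_top at_top"
    using assms by real_asymp
  ultimately have "eventually Q at_top"
    unfolding Q_def by (rule eventually_compose_filterlim[OF eventually_all_ge_at_top])
  then show ?thesis
  proof (rule germ_subset_std_power_domainI[OF \<open>0 < C / 2\<close> assms(2,3) \<open>0 < C * c / 8\<close> \<open>0 < 2 + C\<close>])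
    fix w assume "w \<in> {x + y | x y. x \<in> std_power_domain C e \<and> y \<in> std_power_domain C e}"
    then obtain z1 z2 where z: "0 < Re z1" "0 < Re z2" and w: "w = phiCe C e z1 + phiCe C e z2"
      by (auto simp: std_power_domain_def Hplane_def)
    define S where "S = norm (1 + z1) powr e + norm (1 + z2) powr e"
    define A where "A = norm (1 + z1) + norm (1 + z2)"
    have "0 < Re w \<and> C * c / 8 * A powr e < power_margin (C / 2) e w" if "Q A"
    proof -
      have "A powr e \<le> S"
        using assms by (simp add: A_def S_def powr_add_le_add_powr)
      then have "L < C * c / 8 * S" "C * (1 + c / 2) * (C * S) powr e < C * c / 4 * S"
        using \<open>Q A\<close> by (simp_all add: Q_def)
      moreover have "C * (1 + (Re z1 + Re z2)) powr e \<le> Re z1 + Re z2 + L"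
        using z by (intro L) simp
      ultimately have "0 < Re w" "C * c / 8 * S < power_margin (C / 2) e w"
        using power_margin_half_sum_gt[of C e z1 z2 L] assms z by (simp_all add: w S_def c_def)
      moreover have "C * c / 8 * A powr e \<le> C * c / 8 * S"
        using \<open>A powr e \<le> S\<close> \<open>0 < C * c / 8\<close> by (intro mult_left_mono) simp_all
      ultimately show ?thesis
        by simp
    qed
    moreover have "norm (1 + w) \<le> (2 + C) * A"
      using norm_one_plus_sum_phiCe_le[of C e z1 z2] assms z by (simp add: w A_def)
    ultimately show "\<exists>A. norm (1 + w) \<le> (2 + C) * A \<and> (Q A \<longrightarrow> 0 < Re w \<and> C * c / 8 * A powr e < power_margin (C / 2) e w)"
      by blast
  qed
qed

section \<open>Logarithms\<close>

lemma std_power_domain_subset_Hplane: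
  assumes "0 \<le> C" "0 \<le> e" "e \<le> 1"
  shows "std_power_domain C e \<subseteq> Hplane 0"
proof
  fix w assume "w \<in> std_power_domain C e"
  then obtain z where z: "0 < Re z" "w = phiCe C e z"
    by (auto simp: std_power_domain_def Hplane_def)
  have "0 \<le> e * pi" "e * pi \<le> pi"
    using assms pi_gt_zero mult_right_mono[of e 1 pi] by auto
  then have "0 \<le> cos (e * pi / 2)"
    by (intro cos_ge_zero) linarith+
  then have "0 \<le> C * cos (e * pi / 2) * norm (1 + z) powr e"
    using assms(1) by simp
  then show "w \<in> Hplane 0"
    using Re_phiCe_ge[of C e z] assms z by (simp add: Hplane_def)
qed

lemma half_strip_subset_std_power_domain:
  assumes "0 < D" "0 < e" "e < 1"
  obtains a where "0 < a" "{v. a < Re v \<and> \<bar>Im v\<bar> \<le> h} \<subseteq> std_power_domain D e"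
proof -
  obtain b where b: "\<And>v. b \<le> norm v \<Longrightarrow> 0 < Re v \<Longrightarrow> 1 * norm (1 + v) powr e < power_margin D e v \<Longrightarrow>
      v \<in> std_power_domain D e"
    using eventually_mem_std_power_domain[OF assms zero_less_one] by (auto simp: eventually_at_infinity)
  have "\<forall>\<^sub>F x in at_top. (1 + D) * (1 + x + \<bar>h\<bar>) powr e < x"
    using assms by real_asymp
  then obtain a0 where a0: "\<And>x. a0 \<le> x \<Longrightarrow> (1 + D) * (1 + x + \<bar>h\<bar>) powr e < x"
    by (auto simp: eventually_at_top_linorder)
  define a where "a = max (max a0 b) 1"
  have "{v. a < Re v \<and> \<bar>Im v\<bar> \<le> h} \<subseteq> std_power_domain D e"
  proof clarify
    fix v assume v: "a < Re v" "\<bar>Im v\<bar> \<le> h"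
    show "v \<in> std_power_domain D e"
    proof (rule b)
      show "b \<le> norm v" "0 < Re v"
        using v complex_Re_le_cmod[of v] by (auto simp: a_def)
      have "norm (1 + v) \<le> 1 + Re v + \<bar>h\<bar>"
        using cmod_le[of "1 + v"] v by (auto simp: a_def)
      then have bound: "norm (1 + v) powr e \<le> (1 + Re v + \<bar>h\<bar>) powr e"
        using assms(2) by (simp add: powr_mono2)
      have "D * Re ((1 + v) powr complex_of_real e) \<le> D * norm (1 + v) powr e"
        using Re_powr_of_real_le assms(1) by (simp add: mult_left_mono)
      also have "\<dots> \<le> D * (1 + Re v + \<bar>h\<bar>) powr e"
        using bound assms(1) by (simp add: mult_left_mono)
      moreover have "(1 + D) * (1 + Re v + \<bar>h\<bar>) powr e < Re v"
        using a0 v by (simp add: a_def)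
      ultimately show "1 * norm (1 + v) powr e < power_margin D e v"
        using bound by (simp add: power_margin_def algebra_simps)
    qed
  qed
  moreover have "0 < a"
    by (simp add: a_def)
  ultimately show ?thesis
    using that by blast
qed

lemma Ln_image_germ_subset_std_power_domain:
  assumes "is_std_power_domain U" "0 \<notin> A" \<comment> \<open>\<open>Ln 0\<close> is unspecified\<close>
  shows "\<exists>a>0. germ_subset (Ln ` A \<inter> Hplane a) (U \<inter> Hplane a)"
proof -
  obtain D e where "0 < D" "0 < e" "e < 1" and U: "U = std_power_domain D e"
    using assms(1) by (auto simp: is_std_power_domain_def)
  then obtain a where "0 < a" and strip: "{v. a < Re v \<and> \<bar>Im v\<bar> \<le> pi} \<subseteq> U"
    using half_strip_subset_std_power_domain by metis
  have "\<bar>Im (Ln u)\<bar> \<le> pi" if "u \<in> A" for u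
  proof -
    have "u \<noteq> 0"
      using that assms(2) by auto
    then show ?thesis
      using mpi_less_Im_Ln[of u] Im_Ln_le_pi[of u] by (auto simp: abs_le_iff)
  qed
  then have "Ln ` A \<inter> Hplane a \<subseteq> U \<inter> Hplane a"
    using strip by (auto simp: Hplane_def)
  then show ?thesis
    using \<open>0 < a\<close> subset_imp_germ_subset by blast
qed

theorem lemma3p2:
  fixes C eps :: real
  assumes "C > 0" and "0 < eps" and "eps < 1"
  shows "(\<forall>D eps' \<delta>. D > 0 \<longrightarrow> eps < eps' \<longrightarrow> eps' < 1 \<longrightarrow> \<delta> > 0 \<longrightarrow>
            germ_subset (tube (std_power_domain D eps') \<delta>) (std_power_domain C eps))
    \<and> (\<forall>D \<delta>. D > C \<longrightarrow> \<delta> > 0 \<longrightarrow>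
            germ_subset (tube (std_power_domain D eps) \<delta>) (std_power_domain C eps))
    \<and> (\<forall>\<nu>. 0 < \<nu> \<longrightarrow> \<nu> \<le> 1 \<longrightarrow>
            germ_subset ((\<lambda>z. complex_of_real \<nu> * z) ` std_power_domain C eps)
                        (std_power_domain (\<nu> * C) eps))
    \<and> (\<forall>\<nu>. 1 \<le> \<nu> \<longrightarrow>
            germ_subset ((\<lambda>z. complex_of_real \<nu> * z) ` std_power_domain C eps)
                        (std_power_domain C eps))
    \<and> germ_subset {x + y | x y. x \<in> std_power_domain C eps \<and> y \<in> std_power_domain C eps}
                  (std_power_domain (C / 2) eps)
    \<and> (\<forall>U. is_std_power_domain U \<longrightarrow>
          (\<exists>a>0. germ_subset (Ln ` std_power_domain C eps \<inter> Hplane a) (U \<inter> Hplane a)))"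
proof -
  have "0 \<notin> std_power_domain C eps"
    using std_power_domain_subset_Hplane[of C eps] assms by (auto simp: Hplane_def)
  then show ?thesis
    using assms germ_subset_tube_std_power_domain_exponent[of C eps]
      germ_subset_tube_std_power_domain_constant[of C _ eps] germ_subset_scaled_le_one[of C eps]
      germ_subset_scaled_ge_one[of C eps] germ_subset_sum_std_power_domain[of C eps]
      Ln_image_germ_subset_std_power_domain[of _ "std_power_domain C eps"]
    by blast
qed

end
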